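(* For every natural number $n$ and all annotated terms $g,d$: if $\mathrm{decide}(n,g,d)=\mathrm{true}$, then the sequent $(g,d)$ is derivable in the orthologic sequent calculus $\mathcal{P}$.
   Context: Terms are generated by the grammar $t ::= \mathrm{Var}(k) \mid \mathrm{Meet}(t,t) \mid \mathrm{Join}(t,t) \mid \mathrm{Not}(t)$, where $k$ ranges over positive integers. An annotated term is either $N$, $L\,t$ or $R\,t$ for a term $t$. A sequent is an ordered pair of annotated terms. The proof system $\mathcal{P}$: the derivable sequents form the least set of sequents closed under the following rules, where $\gamma,\delta$ are arbitrary annotated terms and $a,b$ are terms. - Hyp: $(L\,a,R\,a)$. - Weaken: from $(\gamma,N)$ infer $(\gamma,\delta)$. - Contract: from $(\gamma,\gamma)$ infer $(\gamma,N)$. - Swap: from $(\gamma,\delta)$ infer $(\delta,\gamma)$. - LeftAnd1 and LeftAnd2: from $(\gamma,L\,a)$, respectively from $(\gamma,L\,b)$, infer $(\gamma,L\,\mathrm{Meet}(a,b))$. - LeftOr: from $(\gamma,L\,a)$ and $(\gamma,L\,b)$ infer $(\gamma,L\,\mathrm{Join}(a,b))$. - LeftNot: from $(\gamma,R\,a)$ infer $(\gamma,L\,\mathrm{Not}(a))$. - RightAnd: from $(\gamma,R\,a)$ and $(\gamma,R\,b)$ infer $(\gamma,R\,\mathrm{Meet}(a,b))$. - RightOr1 and RightOr2: from $(\gamma,R\,a)$, respectively from $(\gamma,R\,b)$, infer $(\gamma,R\,\mathrm{Join}(a,b))$. - RightNot: from $(\gamma,L\,a)$ infer $(\gamma,R\,\mathrm{Not}(a))$.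 - Cut: from $(\gamma,R\,b)$ and $(L\,b,\delta)$ infer $(\gamma,\delta)$. The fuel-bounded proof-search function $\mathrm{decide}:\mathbb{N}\times\mathrm{AnTerm}\times\mathrm{AnTerm}\to\{\mathrm{true},\mathrm{false}\}$ is defined recursively. First, $\mathrm{decide}(0,g,d)=\mathrm{false}$. Second, $\mathrm{decide}(n+1,g,d)=\mathrm{true}$ iff at least one of the following holds, where every recursive call uses fuel $n$: - $g=L\,\mathrm{Var}(a)$ and $d=R\,\mathrm{Var}(a)$ for the same $a$; - $\mathrm{decide}(n,g,N)$; - $d=N$ and $\mathrm{decide}(n,g,g)$; - $g=L\,\mathrm{Meet}(a,b)$ and $\mathrm{decide}(n,L\,a,d)$; - $g=L\,\mathrm{Meet}(a,b)$ and $\mathrm{decide}(n,L\,b,d)$; - $g=L\,\mathrm{Join}(a,b)$ and both $\mathrm{decide}(n,L\,a,d)$ and $\mathrm{decide}(n,L\,b,d)$; - $g=L\,\mathrm{Not}(a)$ and $\mathrm{decide}(n,R\,a,d)$; - $g=R\,\mathrm{Join}(a,b)$ and $\mathrm{decide}(n,R\,a,d)$; - $g=R\,\mathrm{Join}(a,b)$ and $\mathrm{decide}(n,R\,b,d)$; - $g=R\,\mathrm{Meet}(a,b)$ and both $\mathrm{decide}(n,R\,a,d)$ and $\mathrm{decide}(n,R\,b,d)$; - $g=R\,\mathrm{Not}(a)$ and $\mathrm{decide}(n,L\,a,d)$; - $\mathrm{decide}(n,d,g)$. *)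

theory Defs
  imports Main
begin

datatype oterm = Var nat | Meet "oterm" "oterm" | Join "oterm" "oterm" | Not "oterm"

datatype anTerm = N | L "oterm" | R "oterm"

inductive prov :: "anTerm \<Rightarrow> anTerm \<Rightarrow> bool" where
  Hyp: "prov (L a) (R a)"
| Weaken: "prov \<gamma> N \<Longrightarrow> prov \<gamma> \<delta>"
| Contract: "prov \<gamma> \<gamma> \<Longrightarrow> prov \<gamma> N"
| Swap: "prov \<gamma> \<delta> \<Longrightarrow> prov \<delta> \<gamma>"
| LeftAnd1: "prov \<gamma> (L a) \<Longrightarrow> prov \<gamma> (L (Meet a b))"
| LeftAnd2: "prov \<gamma> (L b) \<Longrightarrow> prov \<gamma> (L (Meet a b))"
| LeftOr: "prov \<gamma> (L a) \<Longrightarrow> prov \<gamma> (L b) \<Longrightarrow> prov \<gamma> (L (Join a b))"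
| LeftNot: "prov \<gamma> (R a) \<Longrightarrow> prov \<gamma> (L (Not a))"
| RightAnd: "prov \<gamma> (R a) \<Longrightarrow> prov \<gamma> (R b) \<Longrightarrow> prov \<gamma> (R (Meet a b))"
| RightOr1: "prov \<gamma> (R a) \<Longrightarrow> prov \<gamma> (R (Join a b))"
| RightOr2: "prov \<gamma> (R b) \<Longrightarrow> prov \<gamma> (R (Join a b))"
| RightNot: "prov \<gamma> (L a) \<Longrightarrow> prov \<gamma> (R (Not a))"
| Cut: "prov \<gamma> (R b) \<Longrightarrow> prov (L b) \<delta> \<Longrightarrow> prov \<gamma> \<delta>"

fun decide :: "nat \<Rightarrow> anTerm \<Rightarrow> anTerm \<Rightarrow> bool" where
  "decide 0 g d = False"
| "decide (Suc n) g d =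
    ((\<exists>a. g = L (Var a) \<and> d = R (Var a))
     \<or> decide n g N
     \<or> (d = N \<and> decide n g g)
     \<or> (\<exists>a b. g = L (Meet a b) \<and> decide n (L a) d)
     \<or> (\<exists>a b. g = L (Meet a b) \<and> decide n (L b) d)
     \<or> (\<exists>a b. g = L (Join a b) \<and> decide n (L a) d \<and> decide n (L b) d)
     \<or> (\<exists>a. g = L (Not a) \<and> decide n (R a) d)
     \<or> (\<exists>a b. g = R (Join a b) \<and> decide n (R a) d)
     \<or> (\<exists>a b. g = R (Join a b) \<and> decide n (R b) d)
     \<or> (\<exists>a b. g = R (Meet a b) \<and> decide n (R a) d \<and> decide n (R b) d)
     \<or> (\<exists>a. g = R (Not a) \<and> decide n (L a) d)
     \<or> decide n d g)"

end

theory Submission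
  imports Defs
begin

text \<open>Each logical clause of decide puts the principal formula in the first component,
whereas the rules of the calculus introduce it in the second; Swap mediates between the two.\<close>

lemma prov_L_Meet1: "prov (L a) \<delta> \<Longrightarrow> prov (L (Meet a b)) \<delta>"
  by (meson Swap LeftAnd1)

lemma prov_L_Meet2: "prov (L b) \<delta> \<Longrightarrow> prov (L (Meet a b)) \<delta>"
  by (meson Swap LeftAnd2)

lemma prov_L_Join: "prov (L a) \<delta> \<Longrightarrow> prov (L b) \<delta> \<Longrightarrow> prov (L (Join a b)) \<delta>"
  by (meson Swap LeftOr)

lemma prov_L_Not: "prov (R a) \<delta> \<Longrightarrow> prov (L (Not a)) \<delta>"
  by (meson Swap LeftNot)

lemma prov_R_Join1: "prov (R a) \<delta> \<Longrightarrow> prov (R (Join a b)) \<delta>"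
  by (meson Swap RightOr1)

lemma prov_R_Join2: "prov (R b) \<delta> \<Longrightarrow> prov (R (Join a b)) \<delta>"
  by (meson Swap RightOr2)

lemma prov_R_Meet: "prov (R a) \<delta> \<Longrightarrow> prov (R b) \<delta> \<Longrightarrow> prov (R (Meet a b)) \<delta>"
  by (meson Swap RightAnd)

lemma prov_R_Not: "prov (L a) \<delta> \<Longrightarrow> prov (R (Not a)) \<delta>"
  by (meson Swap RightNot)

theorem mainTheorem2:
  fixes n :: nat and g d :: anTerm
  assumes "decide n g d"
  shows "prov g d"
  using assms
proof (induction n arbitrary: g d)
  case 0
  then show ?case by simp
next
  case (Suc n)
  from Suc.prems show ?case
    by (auto intro: Suc.IH Hyp Weaken Contract Swap prov_L_Meet1 prov_L_Meet2 prov_L_Join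
        prov_L_Not prov_R_Join1 prov_R_Join2 prov_R_Meet prov_R_Not)
qed

end
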